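(* Fix $n,m,\mu\in\mathbb{N}$ and $\delta\in\mathbb{R}$, and fix angles $\theta_1,\dots,\theta_n$ and $\phi_1,\dots,\phi_m$ satisfying $|\theta_i|,|\phi_j|<\pi/2$ if $\mu=1$ and $|\theta_i|,|\phi_j|<\pi/(2(\mu-1))$ if $\mu>1$. Let $S$ be the set of triples $(x,v,\zeta)\in[0,+\infty)^{n+m}\times[0,+\infty)^n\times(0,+\infty)^m$ with $x_1\geq x_2\geq\cdots\geq x_{n+m}$ such that $$x\succ_w (v_1,\dots,v_n,\zeta_1^\mu,\dots,\zeta_m^\mu)$$ and $$\sum_{i=1}^n x_i^{k/\mu}+\sum_{i=1}^n v_i^{k/\mu}\cos(\theta_i k)\;\geq\;\sum_{i=1}^m \zeta_i^{k}\cos(\phi_i k)\quad\text{for all }k\in\{1,\dots,\mu-1\}.$$ Then $S$ is a convex set.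
   Context: For $y\in\mathbb{R}^{N}$, $y^{\downarrow}$ is the vector of its components sorted in descending order; $x\succ_w y$ (weak majorization) means $\sum_{i=1}^k x^{\downarrow}_i\geq\sum_{i=1}^k y^{\downarrow}_i$ for all $k=1,\dots,N$. Interpretation: for a transfer function with poles $p\in\mathbb{C}^n$ ($p_1,\dots,p_{n_r}$ real, the rest non-real) and zeros $z\in\mathbb{C}^m$, with $\theta_i=\angle(p_i+\delta)$, $\phi_j=\angle(z_j+\delta)$, $w_i=(p_i+\delta)^\mu$ for $i\le n_r$ and $w_i=0$ otherwise, $v_i=0$ for $i\le n_r$, $v_i=|p_i+\delta|^\mu$ for $n_r<i\le n$, and $\zeta_j=|z_j+\delta|$, the variables are $x=w^{\downarrow}$, $(v_1,\dots,v_n)$ and $\zeta$, and the two displayed conditions are the sufficient conditions for logarithmic complete monotonicity expressed in these variables. *)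

theory Defs
  imports "HOL-Analysis.Analysis"
begin

text \<open>Vectors of length N are represented as lists; the descending rearrangement
  of xs is rev (sort xs).\<close>

definition desc_sort :: "real list \<Rightarrow> real list" where
  "desc_sort xs = rev (sort xs)"

definition weakly_majorizes :: "real list \<Rightarrow> real list \<Rightarrow> bool" where
  "weakly_majorizes xs ys \<longleftrightarrow> length xs = length ys \<and>
     (\<forall>k\<in>{1..length xs}. sum_list (take k (desc_sort xs)) \<ge> sum_list (take k (desc_sort ys)))"

text \<open>The set S. Points of R^(n+m), R^n, R^m are encoded as functions nat \<Rightarrow> real
  with indices 0..N-1 and vanishing outside.\<close>
definition setS :: "nat \<Rightarrow> nat \<Rightarrow> nat \<Rightarrow> (nat \<Rightarrow> real) \<Rightarrow> (nat \<Rightarrow> real)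
     \<Rightarrow> ((nat \<Rightarrow> real) \<times> (nat \<Rightarrow> real) \<times> (nat \<Rightarrow> real)) set" where
  "setS n m \<mu> \<theta> \<phi> = {(x, v, \<zeta>).
     (\<forall>i. i \<ge> n + m \<longrightarrow> x i = 0) \<and> (\<forall>i. i \<ge> n \<longrightarrow> v i = 0) \<and> (\<forall>j. j \<ge> m \<longrightarrow> \<zeta> j = 0) \<and>
     (\<forall>i < n + m. x i \<ge> 0) \<and> (\<forall>i < n. v i \<ge> 0) \<and> (\<forall>j < m. \<zeta> j > 0) \<and>
     (\<forall>i j. i \<le> j \<longrightarrow> j < n + m \<longrightarrow> x i \<ge> x j) \<and>
     weakly_majorizes (map x [0..<n+m]) (map v [0..<n] @ map (\<lambda>j. \<zeta> j ^ \<mu>) [0..<m]) \<and>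
     (\<forall>k\<in>{1..<\<mu>}.
        (\<Sum>i<n. x i powr (real k / real \<mu>)) + (\<Sum>i<n. v i powr (real k / real \<mu>) * cos (\<theta> i * real k))
          \<ge> (\<Sum>j<m. \<zeta> j ^ k * cos (\<phi> j * real k)))}"

end

theory Submission
  imports Defs
begin

(* Every condition defining S is convex in (x, v, zeta). The support, sign and ordering
   conditions are linear. The sum of the k largest entries of a vector w equals
   min_c (k c + sum_i max (w_i - c) 0), hence is convex and monotone in w; as x is sorted, its
   top-k sums are linear, and zeta |-> zeta^mu is convex on [0, oo), so weak majorization
   survives convex combinations. For 1 <= k < mu the angle bounds give cos (theta_i k) >= 0 and
   cos (phi_j k) >= 0, and k/mu <= 1 makes s |-> s^(k/mu) concave; so the left-hand side of
   the trigonometric condition is concave and its right-hand side convex. *)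

lemma concave_on_powr:
  fixes p :: real
  assumes p: "0 < p" "p \<le> 1"
  shows "concave_on {0..} (\<lambda>x. x powr p)"
proof (rule concave_on_linorderI)
  fix t x y :: real
  assume t: "0 < t" "t < 1" and xy: "x \<in> {0..}" "y \<in> {0..}" "x < y"
  show "(1 - t) * x powr p + t * y powr p \<le> ((1 - t) *\<^sub>R x + t *\<^sub>R y) powr p"
  proof (cases "x = 0")
    case True
    have "t powr 1 \<le> t powr p"
      using t p by (intro powr_mono') auto
    then have "t * y powr p \<le> t powr p * y powr p"
      by (intro mult_right_mono) auto
    also have "\<dots> = (t * y) powr p"
      using t xy by (simp add: powr_mult)
    finally show ?thesis
      using True by simp
  next
    case False
    have "concave_on {0<..} (\<lambda>x::real. x powr p)"
    proof (rule f''_le0_imp_concave)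
      fix x :: real
      assume x: "x \<in> {0<..}"
      show "((\<lambda>x. x powr p) has_real_derivative p * x powr (p - 1)) (at x)"
        using x by (auto intro!: derivative_eq_intros)
      show "((\<lambda>x. p * x powr (p - 1)) has_real_derivative p * ((p - 1) * x powr (p - 2))) (at x)"
        using x by (auto intro!: derivative_eq_intros simp: algebra_simps)
      show "p * ((p - 1) * x powr (p - 2)) \<le> 0"
        using x p by (intro mult_nonneg_nonpos mult_nonpos_nonneg) auto
    qed simp
    from concave_onD[OF this, of t x y] show ?thesis
      using t xy False by auto
  qed
qed simp

lemma convex_on_power_nonneg: "convex_on {0::real..} (\<lambda>x. x ^ n)"
  by (cases "even n") (auto intro: convex_power_odd convex_on_subset[OF convex_power_even])

lemma convex_on_sum_combination:
  fixes f :: "real \<Rightarrow> real"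
  assumes f: "convex_on A f" and t: "0 \<le> t" "t \<le> 1"
    and mem: "\<And>i. i \<in> I \<Longrightarrow> x i \<in> A \<and> y i \<in> A \<and> 0 \<le> c i"
  shows "(\<Sum>i\<in>I. f ((1 - t) * x i + t * y i) * c i)
    \<le> (1 - t) * (\<Sum>i\<in>I. f (x i) * c i) + t * (\<Sum>i\<in>I. f (y i) * c i)"
proof -
  have "(\<Sum>i\<in>I. f ((1 - t) * x i + t * y i) * c i) \<le> (\<Sum>i\<in>I. ((1 - t) * f (x i) + t * f (y i)) * c i)"
  proof (rule sum_mono)
    fix i assume "i \<in> I"
    with convex_onD[OF f, of t "x i" "y i"] mem t
    show "f ((1 - t) * x i + t * y i) * c i \<le> ((1 - t) * f (x i) + t * f (y i)) * c i"
      by (intro mult_right_mono) auto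
  qed
  also have "\<dots> = (1 - t) * (\<Sum>i\<in>I. f (x i) * c i) + t * (\<Sum>i\<in>I. f (y i) * c i)"
    by (simp add: distrib_right sum.distrib sum_distrib_left mult.assoc)
  finally show ?thesis .
qed

lemma concave_on_sum_combination:
  fixes f :: "real \<Rightarrow> real"
  assumes f: "concave_on A f" and t: "0 \<le> t" "t \<le> 1"
    and mem: "\<And>i. i \<in> I \<Longrightarrow> x i \<in> A \<and> y i \<in> A \<and> 0 \<le> c i"
  shows "(1 - t) * (\<Sum>i\<in>I. f (x i) * c i) + t * (\<Sum>i\<in>I. f (y i) * c i)
    \<le> (\<Sum>i\<in>I. f ((1 - t) * x i + t * y i) * c i)"
proof -
  have "convex_on A (\<lambda>x. - f x)"
    using f by (simp add: concave_on_def)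
  from convex_on_sum_combination[OF this t, of I x y c] mem show ?thesis
    by (simp add: sum_negf)
qed

lemma cos_mult_nonneg:
  assumes \<alpha>: "\<bar>\<alpha>\<bar> < pi / (2 * (real \<mu> - 1))" and k: "k < \<mu>"
  shows "0 \<le> cos (\<alpha> * real k)"
proof (cases "k = 0")
  case False
  then have \<mu>: "real \<mu> - 1 > 0"
    using k by linarith
  have "\<bar>\<alpha> * real k\<bar> \<le> \<bar>\<alpha>\<bar> * (real \<mu> - 1)"
    using k by (simp add: abs_mult mult_left_mono)
  also have "\<dots> \<le> pi / 2"
    using \<alpha> \<mu> by (simp add: field_simps)
  finally show ?thesis
    by (intro cos_ge_zero) auto
qed simp

lemma sum_powr_ge_sum_power_combination:
  fixes x x' v v' z z' c d :: "nat \<Rightarrow> real"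
  assumes p: "0 < p" "p \<le> 1" and t: "0 \<le> t" "t \<le> 1"
    and nonneg_n: "\<And>i. i < n \<Longrightarrow> 0 \<le> x i \<and> 0 \<le> x' i \<and> 0 \<le> v i \<and> 0 \<le> v' i \<and> 0 \<le> c i"
    and nonneg_m: "\<And>j. j < m \<Longrightarrow> 0 \<le> z j \<and> 0 \<le> z' j \<and> 0 \<le> d j"
    and ineq: "(\<Sum>j<m. z j ^ k * d j) \<le> (\<Sum>i<n. x i powr p) + (\<Sum>i<n. v i powr p * c i)"
      "(\<Sum>j<m. z' j ^ k * d j) \<le> (\<Sum>i<n. x' i powr p) + (\<Sum>i<n. v' i powr p * c i)"
  shows "(\<Sum>j<m. ((1 - t) * z j + t * z' j) ^ k * d j)
    \<le> (\<Sum>i<n. ((1 - t) * x i + t * x' i) powr p) + (\<Sum>i<n. ((1 - t) * v i + t * v' i) powr p * c i)"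
proof -
  note powr = concave_on_sum_combination[OF concave_on_powr[OF p] t]
  have "(1 - t) * (\<Sum>i<n. x i powr p * 1) + t * (\<Sum>i<n. x' i powr p * 1)
      \<le> (\<Sum>i<n. ((1 - t) * x i + t * x' i) powr p * 1)"
    by (rule powr) (simp add: nonneg_n)
  moreover have "(1 - t) * (\<Sum>i<n. v i powr p * c i) + t * (\<Sum>i<n. v' i powr p * c i)
      \<le> (\<Sum>i<n. ((1 - t) * v i + t * v' i) powr p * c i)"
    by (rule powr) (simp add: nonneg_n)
  moreover have "(\<Sum>j<m. ((1 - t) * z j + t * z' j) ^ k * d j)
      \<le> (1 - t) * (\<Sum>j<m. z j ^ k * d j) + t * (\<Sum>j<m. z' j ^ k * d j)"
    by (rule convex_on_sum_combination[OF convex_on_power_nonneg t]) (simp add: nonneg_m)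
  moreover have "(1 - t) * (\<Sum>j<m. z j ^ k * d j) + t * (\<Sum>j<m. z' j ^ k * d j)
      \<le> (1 - t) * ((\<Sum>i<n. x i powr p) + (\<Sum>i<n. v i powr p * c i))
        + t * ((\<Sum>i<n. x' i powr p) + (\<Sum>i<n. v' i powr p * c i))"
    using ineq t by (intro add_mono mult_left_mono) auto
  ultimately show ?thesis
    by (simp add: algebra_simps)
qed

definition sum_largest :: "nat \<Rightarrow> real list \<Rightarrow> real" where
  "sum_largest k xs = sum_list (take k (desc_sort xs))"

lemma weakly_majorizes_iff_sum_largest:
  "weakly_majorizes xs ys \<longleftrightarrow>
     length xs = length ys \<and> (\<forall>k\<in>{1..length xs}. sum_largest k ys \<le> sum_largest k xs)"
  by (simp add: weakly_majorizes_def sum_largest_def)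

lemma length_desc_sort [simp]: "length (desc_sort xs) = length xs"
  by (simp add: desc_sort_def)

lemma sorted_desc_sort: "sorted_wrt (\<ge>) (desc_sort xs)"
  by (simp add: desc_sort_def sorted_wrt_rev)

lemma desc_sort_id:
  assumes "sorted_wrt (\<ge>) xs"
  shows "desc_sort xs = xs"
proof -
  have "sort xs = rev xs"
    by (rule properties_for_sort) (use assms in \<open>auto simp: sorted_wrt_rev\<close>)
  then show ?thesis
    by (simp add: desc_sort_def)
qed

lemma sum_list_map_desc_sort: "(\<Sum>x\<leftarrow>desc_sort xs. f x) = (\<Sum>x\<leftarrow>xs. f x)"
  for f :: "real \<Rightarrow> real"
  unfolding desc_sort_def by (metis mset_map mset_rev mset_sort sum_mset_sum_list)

lemma sum_largest_le_threshold:
  assumes "k \<le> length xs"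
  shows "sum_largest k xs \<le> real k * c + (\<Sum>x\<leftarrow>xs. max (x - c) 0)"
proof -
  let ?d = "desc_sort xs"
  have "sum_largest k xs \<le> (\<Sum>x\<leftarrow>take k ?d. max (x - c) 0 + c)"
    unfolding sum_largest_def using sum_list_mono[of "take k ?d" "\<lambda>x. x"] by simp
  also have "\<dots> = real k * c + (\<Sum>x\<leftarrow>take k ?d. max (x - c) 0)"
    using assms by (simp add: sum_list_addf sum_list_triv)
  also have "(\<Sum>x\<leftarrow>take k ?d. max (x - c) 0) \<le> (\<Sum>x\<leftarrow>?d. max (x - c) 0)"
  proof -
    have "(\<Sum>x\<leftarrow>?d. max (x - c) 0)
        = (\<Sum>x\<leftarrow>take k ?d. max (x - c) 0) + (\<Sum>x\<leftarrow>drop k ?d. max (x - c) 0)"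
      by (metis append_take_drop_id map_append sum_list_append)
    moreover have "0 \<le> (\<Sum>x\<leftarrow>drop k ?d. max (x - c) 0)"
      by (intro sum_list_nonneg) auto
    ultimately show ?thesis
      by linarith
  qed
  finally show ?thesis
    by (simp add: sum_list_map_desc_sort)
qed

lemma sum_largest_eq_threshold:
  assumes "1 \<le> k" "k \<le> length xs"
  obtains c where "sum_largest k xs = real k * c + (\<Sum>x\<leftarrow>xs. max (x - c) 0)"
proof -
  define T where "T = take k (desc_sort xs)"
  define D where "D = drop k (desc_sort xs)"
  define c where "c = Min (set T)"
  have T: "length T = k" "set T \<noteq> {}"
    using assms by (auto simp: T_def simp flip: length_greater_0_conv)
  have "c \<in> set T" "\<forall>x\<in>set T. c \<le> x"
    using T by (simp_all add: c_def)
  moreover have "\<forall>x\<in>set T. \<forall>y\<in>set D. y \<le> x"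
    using sorted_desc_sort[of xs] append_take_drop_id[of k "desc_sort xs"]
    by (metis T_def D_def sorted_wrt_append)
  ultimately have top: "map (\<lambda>x. max (x - c) 0) T = map (\<lambda>x. x - c) T"
    and rest: "map (\<lambda>x. max (x - c) 0) D = map (\<lambda>x. 0) D"
    by (auto intro!: map_cong)
  have "(\<Sum>x\<leftarrow>T @ D. max (x - c) 0) = sum_list T - real k * c"
    unfolding map_append sum_list_append top rest
    using T by (simp add: sum_list_subtractf sum_list_triv)
  moreover have "(\<Sum>x\<leftarrow>T @ D. max (x - c) 0) = (\<Sum>x\<leftarrow>xs. max (x - c) 0)"
    unfolding T_def D_def append_take_drop_id by (rule sum_list_map_desc_sort)
  ultimately show ?thesis
    by (intro that[of c]) (simp add: sum_largest_def T_def)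
qed

text \<open>The threshold expression is jointly convex and monotone in (c, xs); minimising over c
  keeps both properties.\<close>

lemma sum_largest_le_convex_combination:
  assumes len: "length ws = N" "length as = N" "length bs = N"
    and t: "0 \<le> t" "t \<le> 1"
    and le: "\<And>i. i < N \<Longrightarrow> ws ! i \<le> (1 - t) * as ! i + t * bs ! i"
    and k: "1 \<le> k" "k \<le> N"
  shows "sum_largest k ws \<le> (1 - t) * sum_largest k as + t * sum_largest k bs"
proof -
  obtain ca where ca: "sum_largest k as = real k * ca + (\<Sum>x\<leftarrow>as. max (x - ca) 0)"
    using sum_largest_eq_threshold[of k as] k len by auto
  obtain cb where cb: "sum_largest k bs = real k * cb + (\<Sum>x\<leftarrow>bs. max (x - cb) 0)"
    using sum_largest_eq_threshold[of k bs] k len by auto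
  define c where "c = (1 - t) * ca + t * cb"
  have "sum_largest k ws \<le> real k * c + (\<Sum>x\<leftarrow>ws. max (x - c) 0)"
    using sum_largest_le_threshold k len by simp
  also have "(\<Sum>x\<leftarrow>ws. max (x - c) 0) = (\<Sum>i<N. max (ws ! i - c) 0)"
    using len by (simp add: sum_list_sum_nth atLeast0LessThan)
  also have "\<dots> \<le> (\<Sum>i<N. (1 - t) * max (as ! i - ca) 0 + t * max (bs ! i - cb) 0)"
  proof (rule sum_mono)
    fix i assume "i \<in> {..<N}"
    then have "ws ! i - c \<le> (1 - t) * (as ! i - ca) + t * (bs ! i - cb)"
      using le by (simp add: c_def algebra_simps)
    also have "\<dots> \<le> (1 - t) * max (as ! i - ca) 0 + t * max (bs ! i - cb) 0"
      using t by (intro add_mono mult_left_mono) auto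
    finally show "max (ws ! i - c) 0 \<le> (1 - t) * max (as ! i - ca) 0 + t * max (bs ! i - cb) 0"
      using t by simp
  qed
  also have "\<dots> = (1 - t) * (\<Sum>x\<leftarrow>as. max (x - ca) 0) + t * (\<Sum>x\<leftarrow>bs. max (x - cb) 0)"
    using len by (simp add: sum_list_sum_nth atLeast0LessThan sum.distrib sum_distrib_left)
  finally show ?thesis
    unfolding ca cb c_def by (simp add: algebra_simps)
qed

lemma sum_largest_map_antimono:
  assumes "\<And>i j. i \<le> j \<Longrightarrow> j < N \<Longrightarrow> x j \<le> x i" and "k \<le> N"
  shows "sum_largest k (map x [0..<N]) = (\<Sum>i<k. x i)"
proof -
  have "desc_sort (map x [0..<N]) = map x [0..<N]"
    using assms(1) by (intro desc_sort_id) (auto simp: sorted_wrt_iff_nth_less)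
  then show ?thesis
    using assms(2) by (simp add: sum_largest_def take_map sum_list_sum_nth atLeast0LessThan)
qed

lemma weakly_majorizes_convex_combination:
  fixes x y :: "nat \<Rightarrow> real"
  assumes x: "\<And>i j. i \<le> j \<Longrightarrow> j < N \<Longrightarrow> x j \<le> x i"
    and y: "\<And>i j. i \<le> j \<Longrightarrow> j < N \<Longrightarrow> y j \<le> y i"
    and maj: "weakly_majorizes (map x [0..<N]) ws" "weakly_majorizes (map y [0..<N]) ws'"
    and t: "0 \<le> t" "t \<le> 1"
    and w: "length w = N" "\<And>i. i < N \<Longrightarrow> w ! i \<le> (1 - t) * ws ! i + t * ws' ! i"
  shows "weakly_majorizes (map (\<lambda>i. (1 - t) * x i + t * y i) [0..<N]) w"
  unfolding weakly_majorizes_iff_sum_largest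
proof (intro conjI ballI)
  show "length (map (\<lambda>i. (1 - t) * x i + t * y i) [0..<N]) = length w"
    using w by simp
  fix k assume "k \<in> {1..length (map (\<lambda>i. (1 - t) * x i + t * y i) [0..<N])}"
  then have k: "1 \<le> k" "k \<le> N"
    by auto
  have "sum_largest k w \<le> (1 - t) * sum_largest k ws + t * sum_largest k ws'"
    using maj w t k by (intro sum_largest_le_convex_combination[where N = N])
      (auto simp: weakly_majorizes_def)
  also have "\<dots> \<le> (1 - t) * (\<Sum>i<k. x i) + t * (\<Sum>i<k. y i)"
    using maj k t sum_largest_map_antimono[OF x] sum_largest_map_antimono[OF y]
    by (intro add_mono mult_left_mono) (auto simp: weakly_majorizes_iff_sum_largest)
  also have "\<dots> = (\<Sum>i<k. (1 - t) * x i + t * y i)"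
    by (simp add: sum.distrib sum_distrib_left)
  also have "\<dots> = sum_largest k (map (\<lambda>i. (1 - t) * x i + t * y i) [0..<N])"
    using x y t k by (intro sum_largest_map_antimono[symmetric]) (auto intro!: add_mono mult_left_mono)
  finally show "sum_largest k w \<le> sum_largest k (map (\<lambda>i. (1 - t) * x i + t * y i) [0..<N])" .
qed

theorem proposition9:
  fixes n m \<mu> :: nat and \<delta> :: real and \<theta> \<phi> :: "nat \<Rightarrow> real"
  assumes "\<mu> \<ge> 1"
    and "\<mu> = 1 \<Longrightarrow> (\<forall>i<n. \<bar>\<theta> i\<bar> < pi / 2) \<and> (\<forall>j<m. \<bar>\<phi> j\<bar> < pi / 2)"
    and "\<mu> > 1 \<Longrightarrow> (\<forall>i<n. \<bar>\<theta> i\<bar> < pi / (2 * (real \<mu> - 1))) \<and>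
                    (\<forall>j<m. \<bar>\<phi> j\<bar> < pi / (2 * (real \<mu> - 1)))"
  shows "\<forall>a\<in>setS n m \<mu> \<theta> \<phi>. \<forall>b\<in>setS n m \<mu> \<theta> \<phi>. \<forall>t::real. 0 \<le> t \<and> t \<le> 1 \<longrightarrow>
           ((\<lambda>i. (1 - t) * fst a i + t * fst b i),
            (\<lambda>i. (1 - t) * fst (snd a) i + t * fst (snd b) i),
            (\<lambda>i. (1 - t) * snd (snd a) i + t * snd (snd b) i)) \<in> setS n m \<mu> \<theta> \<phi>"
proof (intro ballI allI impI)
  fix a b and t :: real
  assume "a \<in> setS n m \<mu> \<theta> \<phi>" "b \<in> setS n m \<mu> \<theta> \<phi>" and t: "0 \<le> t \<and> t \<le> 1"
  moreover obtain x v z x' v' z' where ab: "a = (x, v, z)" "b = (x', v', z')"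
    by (cases a, cases b) auto
  ultimately have A: "(x, v, z) \<in> setS n m \<mu> \<theta> \<phi>" and B: "(x', v', z') \<in> setS n m \<mu> \<theta> \<phi>"
    by simp_all
  have power_combination: "((1 - t) * z j + t * z' j) ^ \<mu> \<le> (1 - t) * z j ^ \<mu> + t * z' j ^ \<mu>"
    if "j < m" for j
    using A B t that convex_onD[OF convex_on_power_nonneg, of t "z j" "z' j"]
    by (auto simp: setS_def less_imp_le)
  have "weakly_majorizes (map (\<lambda>i. (1 - t) * x i + t * x' i) [0..<n + m])
      (map (\<lambda>i. (1 - t) * v i + t * v' i) [0..<n] @ map (\<lambda>j. ((1 - t) * z j + t * z' j) ^ \<mu>) [0..<m])"
    using A B t by (intro weakly_majorizes_convex_combination)
      (auto simp: setS_def nth_append not_less less_diff_conv2 intro!: power_combination)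
  moreover have "(\<Sum>j<m. ((1 - t) * z j + t * z' j) ^ k * cos (\<phi> j * real k))
      \<le> (\<Sum>i<n. ((1 - t) * x i + t * x' i) powr (real k / real \<mu>))
        + (\<Sum>i<n. ((1 - t) * v i + t * v' i) powr (real k / real \<mu>) * cos (\<theta> i * real k))"
    if k: "k \<in> {1..<\<mu>}" for k
    using A B t k assms(3) cos_mult_nonneg[of _ \<mu> k]
    by (intro sum_powr_ge_sum_power_combination) (auto simp: setS_def less_imp_le)
  moreover have "0 < (1 - t) * z j + t * z' j" if "j < m" for j
    using A B t that convex_bound_lt[of "- z j" 0 "- z' j" "1 - t" t] by (auto simp: setS_def)
  ultimately show "((\<lambda>i. (1 - t) * fst a i + t * fst b i),
      (\<lambda>i. (1 - t) * fst (snd a) i + t * fst (snd b) i),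
      (\<lambda>i. (1 - t) * snd (snd a) i + t * snd (snd b) i)) \<in> setS n m \<mu> \<theta> \<phi>"
    using A B t unfolding ab setS_def by (auto intro!: add_mono mult_left_mono)
qed

end
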